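(* Let $X$ be a Banach space, $\alpha$ a left tensorial norm on $\ell_\infty\otimes X$, and let $L$ be a Banach lattice and $J\colon X\to L$ a linear isometry such that $\|\bigvee_{j=1}^k|Jy_j|\|=\alpha(\sum_{j=1}^k e_j\otimes y_j)$ for all $k$ and all $y_1,\dots,y_k\in X$. Then for all $n\in\mathbb{N}$, all $x_1,\dots,x_n\in X$ and all $h_1,\dots,h_n\in\ell_\infty$, $$\Big\|\sum_{j=1}^n h_j\otimes Jx_j\Big\|_m=\alpha\Big(\sum_{j=1}^n h_j\otimes x_j\Big).$$
   Context: All spaces are real. $(e_j)$ is the unit vector basis of $c_0\subseteq\ell_\infty$. A norm $\alpha$ on $Y\otimes X$ is left tensorial if $\alpha(y\otimes x)=\|y\|\|x\|$ and $\|T\otimes I_X\|\le\|T\|$ on $(Y\otimes X,\alpha)$ for every bounded $T\colon Y\to Y$. For a Banach space $F$, a Banach lattice $L$ and $u=\sum_{j=1}^n f_j\otimes y_j\in F\otimes L$, $\|u\|_m$ is the order bounded norm of the operator $F^*\to L$, $\varphi\mapsto\sum_j\varphi(f_j)y_j$, i.e. $\|u\|_m=\inf\{\|z\|: z\in L,\ z\ge 0,\ |\sum_j\varphi(f_j)y_j|\le\|\varphi\|z \text{ for all }\varphi\in F^*\}$; equivalently (Krivine calculus) $\|u\|_m=\|\sup_{\|\varphi\|\le1}|\sum_j\varphi(f_j)y_j|\|_L$. *)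

theory Defs
  imports "HOL-Analysis.Analysis"
begin

text \<open>ell_infinity: bounded (automatically continuous) real functions on nat.\<close>
type_synonym linf = "nat \<Rightarrow>\<^sub>C real"

text \<open>Unit vector e_j (indices start at 0).\<close>
definition unitvec :: "nat \<Rightarrow> linf" where
  "unitvec j = Bcontfun (\<lambda>i. if i = j then 1 else 0)"

text \<open>Elements of the algebraic tensor product Y (x) X are represented by finite
  lists of pairs [(y_1,x_1),...,(y_n,x_n)] standing for sum_j y_j (x) x_j.\<close>
definition tensor_eq :: "('y::real_vector \<times> 'x::real_vector) list \<Rightarrow> ('y \<times> 'x) list \<Rightarrow> bool" where
  "tensor_eq u v \<longleftrightarrow> (\<forall>B :: 'y \<Rightarrow> 'x \<Rightarrow> real. bilinear B \<longrightarrow>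
      (\<Sum>(y,x)\<leftarrow>u. B y x) = (\<Sum>(y,x)\<leftarrow>v. B y x))"

definition tensor_norm :: "(('y::real_vector \<times> 'x::real_vector) list \<Rightarrow> real) \<Rightarrow> bool" where
  "tensor_norm \<alpha> \<longleftrightarrow>
     (\<forall>u v. tensor_eq u v \<longrightarrow> \<alpha> u = \<alpha> v) \<and>
     (\<forall>u. 0 \<le> \<alpha> u) \<and>
     (\<forall>u. \<alpha> u = 0 \<longleftrightarrow> tensor_eq u []) \<and>
     (\<forall>u c. \<alpha> (map (\<lambda>(y,x). (c *\<^sub>R y, x)) u) = \<bar>c\<bar> * \<alpha> u) \<and>
     (\<forall>u v. \<alpha> (u @ v) \<le> \<alpha> u + \<alpha> v)"

definition left_tensorial :: "(('y::real_normed_vector \<times> 'x::real_normed_vector) list \<Rightarrow> real) \<Rightarrow> bool" where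
  "left_tensorial \<alpha> \<longleftrightarrow> tensor_norm \<alpha> \<and>
     (\<forall>y x. \<alpha> [(y,x)] = norm y * norm x) \<and>
     (\<forall>T u. bounded_linear T \<longrightarrow>
        \<alpha> (map (\<lambda>(y,x). (T y, x)) u) \<le> onorm T * \<alpha> u)"

definition labs :: "'a::{lattice, uminus} \<Rightarrow> 'a" where
  "labs x = sup x (- x)"

definition banach_lattice :: "'l::{banach, ordered_real_vector, lattice} itself \<Rightarrow> bool" where
  "banach_lattice _ \<longleftrightarrow> (\<forall>x y :: 'l. labs x \<le> labs y \<longrightarrow> norm x \<le> norm y)"

fun lsup :: "'a::{lattice, zero} list \<Rightarrow> 'a" where
  "lsup [] = 0"
| "lsup [x] = x"
| "lsup (x # y # zs) = sup x (lsup (y # zs))"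

text \<open>Order bounded norm ||u||_m of u = sum_j f_j (x) y_j in F (x) L, as an extended
  real (infinity if the operator F^* -> L is not order bounded).\<close>
definition m_norm :: "('f::real_normed_vector \<times> 'l::{banach, ordered_real_vector, lattice}) list \<Rightarrow> ereal" where
  "m_norm u = Inf {ereal (norm z) | z. 0 \<le> z \<and>
      (\<forall>\<phi> :: 'f \<Rightarrow> real. bounded_linear \<phi> \<longrightarrow>
         labs (\<Sum>(f,y)\<leftarrow>u. \<phi> f *\<^sub>R y) \<le> onorm \<phi> *\<^sub>R z)}"

end

theory Submission
  imports Defs
begin

text \<open>
  Given \<open>u = \<Sum>\<^sub>j h\<^sub>j \<otimes> x\<^sub>j\<close> and \<open>\<epsilon> > 0\<close>, partition \<open>\<nat>\<close> into finitely many classes on each of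
  which every \<open>h\<^sub>j\<close> oscillates by at most \<open>\<epsilon>\<close>, with representatives \<open>p k\<close>, \<open>k < K\<close>, and class
  map \<open>\<sigma>\<close>. Sampling at the representatives, \<open>h \<mapsto> \<Sum>\<^sub>k h(p k) e\<^sub>k\<close>, and spreading back
  along \<open>\<sigma>\<close> are contractions of \<open>l\<^sub>\<infinity>\<close> whose composite moves each \<open>h\<^sub>j\<close> by at most \<open>\<epsilon>\<close>;
  as \<open>\<alpha>\<close> is left tensorial, \<open>\<alpha>(u)\<close> is therefore within \<open>\<epsilon> \<Sum>\<^sub>j \<parallel>x\<^sub>j\<parallel>\<close> of
  \<open>\<alpha>(\<Sum>\<^sub>k e\<^sub>k \<otimes> v\<^sub>k) = \<parallel>\<Squnion>\<^sub>k |J v\<^sub>k|\<parallel>\<close>, where \<open>v\<^sub>k = \<Sum>\<^sub>j h\<^sub>j(p k) x\<^sub>j\<close>.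
  On the lattice side, evaluation at \<open>p k\<close> shows that every order bound of \<open>u\<close> dominates
  \<open>\<Squnion>\<^sub>k |J v\<^sub>k|\<close>, while \<open>\<Squnion>\<^sub>k |J v\<^sub>k| + \<epsilon> \<Sum>\<^sub>j |J x\<^sub>j|\<close> is an order bound, because every
  functional \<open>\<phi>\<close> on \<open>l\<^sub>\<infinity>\<close> satisfies \<open>\<Sum>\<^sub>k |\<phi>(e\<^sub>k \<circ> \<sigma>)| \<le> \<parallel>\<phi>\<parallel>\<close>. Letting \<open>\<epsilon> \<rightarrow> 0\<close> gives
  \<open>\<parallel>u\<parallel>\<^sub>m = \<alpha>(u)\<close>.
\<close>

lemma linear_sum_list: "linear f \<Longrightarrow> f (\<Sum>a\<leftarrow>xs. g a) = (\<Sum>a\<leftarrow>xs. f (g a))"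
  by (induction xs) (auto simp: linear_add linear_0)

lemma scaleR_sum_list: "c *\<^sub>R (\<Sum>a\<leftarrow>xs. g a) = (\<Sum>a\<leftarrow>xs. c *\<^sub>R g a :: 'b::real_vector)"
  by (rule linear_sum_list) (rule linear_scale_self)

lemma sum_list_sum_swap: "(\<Sum>a\<leftarrow>xs. \<Sum>k\<in>S. f a k) = (\<Sum>k\<in>S. \<Sum>a\<leftarrow>xs. f a k)"
  by (induction xs) (auto simp: sum.distrib)

lemma norm_sum_list_le: "norm (\<Sum>a\<leftarrow>xs. g a) \<le> (\<Sum>a\<leftarrow>xs. norm (g a :: 'b::real_normed_vector))"
  by (induction xs) (auto intro: norm_triangle_le)

section \<open>Sampling bounded sequences\<close>

lemma apply_Bcontfun_nat:
  fixes f :: "nat \<Rightarrow> real"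
  assumes "\<And>i. \<bar>f i\<bar> \<le> M"
  shows "apply_bcontfun (Bcontfun f) = f"
  using assms by (intro Bcontfun_inverse bcontfun_normI) auto

lemma abs_apply_linf_le_norm: "\<bar>apply_bcontfun g i\<bar> \<le> norm (g :: linf)"
  using norm_bounded[of g i] by simp

lemma unitvec_apply: "apply_bcontfun (unitvec k) i = (if i = k then 1 else 0)"
  unfolding unitvec_def by (subst apply_Bcontfun_nat[where M = 1]) auto

lemma apply_linf_sum_unitvec:
  "apply_bcontfun (\<Sum>k<K. a k *\<^sub>R unitvec k) i = (if i < K then a i else 0)"
proof -
  have "apply_bcontfun (\<Sum>k<K. a k *\<^sub>R unitvec k) i = (\<Sum>k<K. a k * apply_bcontfun (unitvec k) i)"
    by (induction K) auto
  also have "\<dots> = (if i < K then a i else 0)"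
    by (simp add: unitvec_apply if_distrib sum.delta' cong: if_cong)
  finally show ?thesis .
qed

lemma bounded_linear_linf_eval: "bounded_linear (\<lambda>g :: linf. apply_bcontfun g i)"
  by (rule bounded_linear_intro[where K = 1]) (auto simp: abs_apply_linf_le_norm)

lemma onorm_linf_eval_le: "onorm (\<lambda>g :: linf. apply_bcontfun g i) \<le> 1"
  by (rule onorm_bound) (auto simp: abs_apply_linf_le_norm)

lemma sum_abs_unitvec_le_onorm:
  assumes "bounded_linear \<phi>"
  shows "(\<Sum>k<K. \<bar>\<phi> (unitvec k)\<bar>) \<le> onorm \<phi>"
proof -
  define g where "g = (\<Sum>k<K. sgn (\<phi> (unitvec k)) *\<^sub>R unitvec k)"
  have "norm g \<le> 1"
    unfolding g_def by (rule norm_bound) (simp add: apply_linf_sum_unitvec abs_sgn_eq)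
  have "(\<Sum>k<K. \<bar>\<phi> (unitvec k)\<bar>) = \<phi> g"
  proof -
    have "sgn a * a = \<bar>a\<bar>" for a :: real
      by (simp add: sgn_if)
    then show ?thesis
      unfolding g_def using assms by (simp add: linear_sum linear_scale bounded_linear.linear)
  qed
  also have "\<dots> \<le> onorm \<phi> * norm g"
    using onorm[OF assms, of g] by simp
  also have "\<dots> \<le> onorm \<phi>"
    using \<open>norm g \<le> 1\<close> onorm_pos_le[OF assms] by (simp add: mult_left_le)
  finally show ?thesis .
qed

definition linf_reindex :: "(nat \<Rightarrow> nat) \<Rightarrow> linf \<Rightarrow> linf" where
  "linf_reindex s g = Bcontfun (\<lambda>i. apply_bcontfun g (s i))"

definition linf_sample :: "(nat \<Rightarrow> nat) \<Rightarrow> nat \<Rightarrow> linf \<Rightarrow> linf" where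
  "linf_sample p K g = (\<Sum>k<K. apply_bcontfun g (p k) *\<^sub>R unitvec k)"

lemma linf_reindex_apply: "apply_bcontfun (linf_reindex s g) i = apply_bcontfun g (s i)"
  unfolding linf_reindex_def
  by (subst apply_Bcontfun_nat[where M = "norm g"]) (auto simp: abs_apply_linf_le_norm)

lemma linf_sample_apply:
  "apply_bcontfun (linf_sample p K g) i = (if i < K then apply_bcontfun g (p i) else 0)"
  unfolding linf_sample_def by (rule apply_linf_sum_unitvec)

lemma norm_linf_reindex_le: "norm (linf_reindex s g) \<le> norm g"
  by (rule norm_bound) (simp add: linf_reindex_apply abs_apply_linf_le_norm)

lemma norm_linf_sample_le: "norm (linf_sample p K g) \<le> norm g"
  by (rule norm_bound) (simp add: linf_sample_apply abs_apply_linf_le_norm)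

lemma bounded_linear_linf_reindex: "bounded_linear (linf_reindex s)"
  by (rule bounded_linear_intro[where K = 1])
     (auto intro!: bcontfun_eqI simp: linf_reindex_apply norm_linf_reindex_le)

lemma bounded_linear_linf_sample: "bounded_linear (linf_sample p K)"
  by (rule bounded_linear_intro[where K = 1])
     (auto intro!: bcontfun_eqI simp: linf_sample_apply norm_linf_sample_le)

lemma onorm_linf_reindex_le: "onorm (linf_reindex s) \<le> 1"
  by (rule onorm_bound) (auto simp: norm_linf_reindex_le)

lemma onorm_linf_sample_le: "onorm (linf_sample p K) \<le> 1"
  by (rule onorm_bound) (auto simp: norm_linf_sample_le)

lemma norm_diff_linf_reindex_sample_le:
  assumes "\<And>i. \<sigma> i < K" and "\<And>i. \<bar>apply_bcontfun h i - apply_bcontfun h (p (\<sigma> i))\<bar> \<le> \<epsilon>"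
  shows "norm (h - linf_reindex \<sigma> (linf_sample p K h)) \<le> \<epsilon>"
  using assms by (intro norm_bound) (simp add: linf_reindex_apply linf_sample_apply)

lemma finite_range_representatives:
  assumes "finite (range q)"
  obtains \<sigma> :: "nat \<Rightarrow> nat" and K :: nat and p :: "nat \<Rightarrow> nat"
  where "\<And>i. \<sigma> i < K" and "\<And>i. q (p (\<sigma> i)) = q i"
proof -
  obtain f where f: "bij_betw f {0..<card (range q)} (range q)"
    using ex_bij_betw_nat_finite[OF assms] by blast
  define \<sigma> where "\<sigma> i = inv_into {0..<card (range q)} f (q i)" for i
  define p where "p k = inv q (f k)" for k
  show thesis
  proof
    show "\<sigma> i < card (range q)" for i
      unfolding \<sigma>_def using f by (metis atLeastLessThan_iff bij_betw_def inv_into_into rangeI)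
    show "q (p (\<sigma> i)) = q i" for i
      unfolding p_def \<sigma>_def using f by (simp add: f_inv_into_f bij_betw_inv_into_right)
  qed
qed

lemma abs_diff_less_of_floor_divide_eq:
  fixes a b \<epsilon> :: real
  assumes "0 < \<epsilon>" and "\<lfloor>a / \<epsilon>\<rfloor> = \<lfloor>b / \<epsilon>\<rfloor>"
  shows "\<bar>a - b\<bar> < \<epsilon>"
proof -
  have "\<bar>a / \<epsilon> - b / \<epsilon>\<bar> < 1"
    using assms(2) floor_eq_iff by (smt (verit, best))
  then show ?thesis
    using assms(1) by (simp add: diff_divide_distrib[symmetric] abs_div divide_less_eq)
qed

lemma linf_finite_sampling:
  fixes H :: "linf set"
  assumes "finite H" and "0 < \<epsilon>"
  obtains \<sigma> :: "nat \<Rightarrow> nat" and K :: nat and p :: "nat \<Rightarrow> nat" where "\<And>i. \<sigma> i < K"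
    and "\<And>h i. h \<in> H \<Longrightarrow> \<bar>apply_bcontfun h i - apply_bcontfun h (p (\<sigma> i))\<bar> \<le> \<epsilon>"
proof -
  define q where "q i = (\<lambda>h \<in> H. \<lfloor>apply_bcontfun h i / \<epsilon>\<rfloor>)" for i
  define B :: "linf \<Rightarrow> int set" where "B h = {\<lfloor>- norm h / \<epsilon>\<rfloor>..\<lfloor>norm h / \<epsilon>\<rfloor>}" for h
  have "range q \<subseteq> (\<Pi>\<^sub>E h \<in> H. B h)"
  proof -
    have "- norm h \<le> apply_bcontfun h i" "apply_bcontfun h i \<le> norm h" for h :: linf and i
      using abs_apply_linf_le_norm[of h i] by auto
    then show ?thesis
      using \<open>0 < \<epsilon>\<close> by (auto simp: q_def B_def intro!: floor_mono divide_right_mono)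
        (metis divide_right_mono less_imp_le minus_divide_left)
  qed
  then have "finite (range q)"
    by (rule finite_subset) (simp add: finite_PiE B_def \<open>finite H\<close>)
  then obtain \<sigma> :: "nat \<Rightarrow> nat" and K :: nat and p :: "nat \<Rightarrow> nat"
    where "\<And>i. \<sigma> i < K" and "\<And>i. q (p (\<sigma> i)) = q i"
    by (rule finite_range_representatives) iprover
  moreover have "\<bar>apply_bcontfun h i - apply_bcontfun h (p (\<sigma> i))\<bar> \<le> \<epsilon>"
    if "h \<in> H" and "q (p (\<sigma> i)) = q i" for h i
    using that \<open>0 < \<epsilon>\<close>
    by (intro less_imp_le abs_diff_less_of_floor_divide_eq) (auto simp: q_def dest: fun_cong[of _ _ h])
  ultimately show thesis using that by blast
qed

lemma linf_list_sampling:
  fixes u :: "(linf \<times> 'x::real_normed_vector) list"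
  assumes "0 < e"
  obtains \<epsilon> :: real and \<sigma> :: "nat \<Rightarrow> nat" and K :: nat and p :: "nat \<Rightarrow> nat"
  where "0 \<le> \<epsilon>" and "\<epsilon> * (\<Sum>(h, x)\<leftarrow>u. norm x) \<le> e" and "\<And>i. \<sigma> i < K"
    and "\<And>h x i. (h, x) \<in> set u \<Longrightarrow> \<bar>apply_bcontfun h i - apply_bcontfun h (p (\<sigma> i))\<bar> \<le> \<epsilon>"
proof -
  define C where "C = (\<Sum>(h, x)\<leftarrow>u. norm x)"
  have "0 \<le> C"
    unfolding C_def by (rule sum_list_nonneg) auto
  define \<epsilon> where "\<epsilon> = e / (C + 1)"
  have "0 < \<epsilon>"
    unfolding \<epsilon>_def using \<open>0 < e\<close> \<open>0 \<le> C\<close> by simp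
  have "\<epsilon> * C \<le> e"
    unfolding \<epsilon>_def using \<open>0 < e\<close> \<open>0 \<le> C\<close> by (simp add: field_simps)
  obtain \<sigma> :: "nat \<Rightarrow> nat" and K :: nat and p :: "nat \<Rightarrow> nat" where "\<And>i. \<sigma> i < K"
    and "\<And>h i. h \<in> fst ` set u \<Longrightarrow> \<bar>apply_bcontfun h i - apply_bcontfun h (p (\<sigma> i))\<bar> \<le> \<epsilon>"
    using linf_finite_sampling[of "fst ` set u" \<epsilon>] \<open>0 < \<epsilon>\<close> by (metis finite_imageI finite_set)
  then show thesis
    using that[of \<epsilon> \<sigma> K p] \<open>0 < \<epsilon>\<close> \<open>\<epsilon> * C \<le> e\<close> unfolding C_def by force
qed

section \<open>Vector lattices\<close>

lemma labs_ge: "x \<le> labs (x :: 'l::{ordered_real_vector, lattice})"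
  unfolding labs_def by simp

lemma labs_ge_minus: "- x \<le> labs (x :: 'l::{ordered_real_vector, lattice})"
  unfolding labs_def by simp

lemma labs_least: "x \<le> z \<Longrightarrow> - x \<le> z \<Longrightarrow> labs (x :: 'l::{ordered_real_vector, lattice}) \<le> z"
  unfolding labs_def by simp

lemma labs_nonneg: "0 \<le> labs (x :: 'l::{ordered_real_vector, lattice})"
proof -
  have "0 \<le> labs x + labs x"
    using add_mono[OF labs_ge[of x] labs_ge_minus[of x]] by simp
  then have "0 \<le> (1/2 :: real) *\<^sub>R (labs x + labs x)"
    by (intro scaleR_nonneg_nonneg) simp_all
  then show ?thesis
    by (metis scaleR_half_double)
qed

lemma labs_of_nonneg: "0 \<le> x \<Longrightarrow> labs (x :: 'l::{ordered_real_vector, lattice}) = x"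
  unfolding labs_def by (rule sup_absorb1) (meson neg_le_0_iff_le order_trans)

lemma labs_labs: "labs (labs (x :: 'l::{ordered_real_vector, lattice})) = labs x"
  by (rule labs_of_nonneg[OF labs_nonneg])

lemma labs_add_le: "labs (x + y) \<le> labs x + labs (y :: 'l::{ordered_real_vector, lattice})"
proof (rule labs_least)
  show "x + y \<le> labs x + labs y"
    by (intro add_mono labs_ge)
  show "- (x + y) \<le> labs x + labs y"
    using add_mono[OF labs_ge_minus[of x] labs_ge_minus[of y]] by simp
qed

lemma labs_scaleR_le: "labs (c *\<^sub>R x) \<le> \<bar>c\<bar> *\<^sub>R labs (x :: 'l::{ordered_real_vector, lattice})"
proof (rule labs_least)
  have "c *\<^sub>R x \<le> \<bar>c\<bar> *\<^sub>R labs x \<and> - (c *\<^sub>R x) \<le> \<bar>c\<bar> *\<^sub>R labs x"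
  proof (cases "0 \<le> c")
    case True
    then show ?thesis
      using scaleR_left_mono[OF labs_ge[of x] True] scaleR_left_mono[OF labs_ge_minus[of x] True]
      by simp
  next
    case False
    then have c: "0 \<le> - c" by simp
    show ?thesis
      using scaleR_left_mono[OF labs_ge[of x] c] scaleR_left_mono[OF labs_ge_minus[of x] c] False
      by (simp add: abs_if)
  qed
  then show "c *\<^sub>R x \<le> \<bar>c\<bar> *\<^sub>R labs x" "- (c *\<^sub>R x) \<le> \<bar>c\<bar> *\<^sub>R labs x"
    by simp_all
qed

lemma labs_sum_list_le:
  "labs (\<Sum>a\<leftarrow>xs. f a) \<le> (\<Sum>a\<leftarrow>xs. labs (f a :: 'l::{ordered_real_vector, lattice}))"
proof (induction xs)
  case Nil
  then show ?case by (simp add: labs_of_nonneg)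
next
  case (Cons a xs)
  then show ?case
    using order_trans[OF labs_add_le add_left_mono[OF Cons.IH]] by simp
qed

lemma labs_sum_le: "labs (sum f S) \<le> (\<Sum>a\<in>S. labs (f a :: 'l::{ordered_real_vector, lattice}))"
proof (induction S rule: infinite_finite_induct)
  case (insert a S)
  then show ?case
    using order_trans[OF labs_add_le add_left_mono[OF insert.IH]] by simp
qed (simp_all add: labs_of_nonneg)

lemma lsup_upper: "x \<in> set xs \<Longrightarrow> x \<le> lsup (xs :: 'a::{lattice, zero} list)"
  by (induction xs rule: lsup.induct) (auto intro: le_supI2)

lemma lsup_least: "(\<And>x. x \<in> set xs \<Longrightarrow> x \<le> z) \<Longrightarrow> 0 \<le> z \<Longrightarrow> lsup (xs :: 'a::{lattice, zero} list) \<le> z"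
  by (induction xs rule: lsup.induct) auto

lemma lsup_nonneg: "(\<And>x. x \<in> set xs \<Longrightarrow> 0 \<le> x) \<Longrightarrow> 0 \<le> lsup (xs :: 'a::{lattice, zero} list)"
  by (induction xs rule: lsup.induct) (auto intro: le_supI1)

lemma banach_lattice_norm_mono:
  assumes "banach_lattice TYPE('l::{banach, ordered_real_vector, lattice})"
    and "0 \<le> x" and "x \<le> (y :: 'l)"
  shows "norm x \<le> norm y"
  using assms order_trans[OF assms(2,3)] unfolding banach_lattice_def by (simp add: labs_of_nonneg)

lemma banach_lattice_norm_labs:
  assumes "banach_lattice TYPE('l::{banach, ordered_real_vector, lattice})"
  shows "norm (labs (x :: 'l)) = norm x"
  using assms unfolding banach_lattice_def by (metis labs_labs order_refl antisym)

section \<open>Tensor norms and order bounds\<close>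

lemma tensor_norm_cong: "tensor_norm \<alpha> \<Longrightarrow> tensor_eq u v \<Longrightarrow> \<alpha> u = \<alpha> v"
  unfolding tensor_norm_def by blast

lemma tensor_norm_nonneg: "tensor_norm \<alpha> \<Longrightarrow> 0 \<le> \<alpha> u"
  unfolding tensor_norm_def by blast

lemma tensor_norm_Nil: "tensor_norm \<alpha> \<Longrightarrow> \<alpha> [] = 0"
  unfolding tensor_norm_def by (simp add: tensor_eq_def)

lemma tensor_norm_append_le: "tensor_norm \<alpha> \<Longrightarrow> \<alpha> (u @ v) \<le> \<alpha> u + \<alpha> v"
  unfolding tensor_norm_def by blast

lemma tensor_eq_map_left:
  fixes T :: "'y::real_vector \<Rightarrow> 'y" and u v :: "('y \<times> 'x::real_vector) list"
  assumes "linear T" and "tensor_eq u v"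
  shows "tensor_eq (map (\<lambda>(y, x). (T y, x)) u) (map (\<lambda>(y, x). (T y, x)) v)"
  unfolding tensor_eq_def
proof (intro allI impI)
  fix B :: "'y \<Rightarrow> 'x \<Rightarrow> real"
  assume "bilinear B"
  then have "bilinear (\<lambda>y x. B (T y) x)"
    using \<open>linear T\<close> unfolding bilinear_def
    by (auto intro: linear_compose[of T "\<lambda>y. B y _", unfolded o_def])
  then have "(\<Sum>(y, x)\<leftarrow>u. B (T y) x) = (\<Sum>(y, x)\<leftarrow>v. B (T y) x)"
    using \<open>tensor_eq u v\<close> unfolding tensor_eq_def by blast
  then show "(\<Sum>(y, x)\<leftarrow>map (\<lambda>(y, x). (T y, x)) u. B y x)
      = (\<Sum>(y, x)\<leftarrow>map (\<lambda>(y, x). (T y, x)) v. B y x)"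
    by (simp add: o_def case_prod_unfold)
qed

lemma tensor_eq_split_left:
  fixes u :: "('y::real_vector \<times> 'x::real_vector) list"
  shows "tensor_eq u (map (\<lambda>(y, x). (T y, x)) u @ map (\<lambda>(y, x). (y - T y, x)) u)"
  unfolding tensor_eq_def
proof (intro allI impI)
  fix B :: "'y \<Rightarrow> 'x \<Rightarrow> real"
  assume "bilinear B"
  then have "linear (\<lambda>y. B y x)" for x
    unfolding bilinear_def by blast
  then have "B (T y) x + B (y - T y) x = B y x" for y x
    using linear_add[of "\<lambda>y. B y x" "T y" "y - T y"] by simp
  then show "(\<Sum>(y, x)\<leftarrow>u. B y x)
      = (\<Sum>(y, x)\<leftarrow>map (\<lambda>(y, x). (T y, x)) u @ map (\<lambda>(y, x). (y - T y, x)) u. B y x)"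
    by (simp add: o_def case_prod_unfold flip: sum_list_addf)
qed

lemma tensor_eq_linf_sample:
  fixes u :: "(linf \<times> 'x::real_vector) list"
  shows "tensor_eq (map (\<lambda>(h, x). (linf_sample p K h, x)) u)
     (map (\<lambda>k. (unitvec k, \<Sum>(h, x)\<leftarrow>u. apply_bcontfun h (p k) *\<^sub>R x)) [0..<K])"
  unfolding tensor_eq_def
proof (intro allI impI)
  fix B :: "linf \<Rightarrow> 'x \<Rightarrow> real"
  assume B: "bilinear B"
  have left: "linear (\<lambda>y. B y x)" and right: "linear (B y)" for x y
    using B unfolding bilinear_def by blast+
  have "(\<Sum>(y, x)\<leftarrow>map (\<lambda>(h, x). (linf_sample p K h, x)) u. B y x)
      = (\<Sum>(h, x)\<leftarrow>u. \<Sum>k<K. apply_bcontfun h (p k) * B (unitvec k) x)"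
    unfolding linf_sample_def by (simp add: o_def case_prod_unfold linear_sum[OF left] linear_scale[OF left])
  also have "\<dots> = (\<Sum>k<K. \<Sum>(h, x)\<leftarrow>u. apply_bcontfun h (p k) * B (unitvec k) x)"
    by (simp add: case_prod_unfold sum_list_sum_swap)
  also have "\<dots> = (\<Sum>(y, x)\<leftarrow>map (\<lambda>k. (unitvec k, \<Sum>(h, x)\<leftarrow>u. apply_bcontfun h (p k) *\<^sub>R x)) [0..<K]. B y x)"
    by (simp add: o_def case_prod_unfold linear_sum_list[OF right] linear_scale[OF right]
        interv_sum_list_conv_sum_set_nat atLeast0LessThan)
  finally show "(\<Sum>(y, x)\<leftarrow>map (\<lambda>(h, x). (linf_sample p K h, x)) u. B y x)
      = (\<Sum>(y, x)\<leftarrow>map (\<lambda>k. (unitvec k, \<Sum>(h, x)\<leftarrow>u. apply_bcontfun h (p k) *\<^sub>R x)) [0..<K]. B y x)" .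
qed

lemma left_tensorial_le_projective:
  assumes "left_tensorial \<alpha>"
  shows "\<alpha> u \<le> (\<Sum>(y, x)\<leftarrow>u. norm y * norm x)"
proof (induction u)
  case Nil
  then show ?case
    using assms by (simp add: left_tensorial_def tensor_norm_Nil)
next
  case (Cons a u)
  obtain y x where "a = (y, x)"
    by force
  have "\<alpha> (a # u) \<le> \<alpha> [a] + \<alpha> u"
    using assms tensor_norm_append_le[of \<alpha> "[a]" u] by (simp add: left_tensorial_def)
  then show ?case
    using Cons assms \<open>a = (y, x)\<close> by (auto simp: left_tensorial_def)
qed

lemma left_tensorial_map_le:
  assumes "left_tensorial \<alpha>" and "bounded_linear T" and "onorm T \<le> 1"
  shows "\<alpha> (map (\<lambda>(y, x). (T y, x)) u) \<le> \<alpha> u"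
proof -
  have "\<alpha> (map (\<lambda>(y, x). (T y, x)) u) \<le> onorm T * \<alpha> u"
    using assms(1,2) unfolding left_tensorial_def by blast
  also have "\<dots> \<le> \<alpha> u"
    using assms(1,3) tensor_norm_nonneg[of \<alpha> u]
    by (simp add: left_tensorial_def mult_left_le_one_le onorm_pos_le[OF assms(2)])
  finally show ?thesis .
qed

definition order_bound ::
  "('f::real_normed_vector \<times> 'l::{ordered_real_vector, lattice}) list \<Rightarrow> 'l \<Rightarrow> bool" where
  "order_bound u z \<longleftrightarrow> 0 \<le> z \<and>
     (\<forall>\<phi> :: 'f \<Rightarrow> real. bounded_linear \<phi> \<longrightarrow> labs (\<Sum>(f, y)\<leftarrow>u. \<phi> f *\<^sub>R y) \<le> onorm \<phi> *\<^sub>R z)"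

lemma order_bound_map_iff:
  "order_bound (map (\<lambda>(f, x). (f, g x)) u) z \<longleftrightarrow> 0 \<le> z \<and>
     (\<forall>\<phi>. bounded_linear \<phi> \<longrightarrow> labs (\<Sum>(f, x)\<leftarrow>u. \<phi> f *\<^sub>R g x) \<le> onorm \<phi> *\<^sub>R z)"
  by (simp add: order_bound_def o_def case_prod_unfold)

lemma m_norm_eq_Inf_order_bound: "m_norm u = Inf {ereal (norm z) | z. order_bound u z}"
  unfolding m_norm_def order_bound_def ..

lemma Inf_ereal_eqI:
  fixes f :: "'a \<Rightarrow> real"
  assumes "\<And>z. P z \<Longrightarrow> a \<le> f z" and "\<And>e. 0 < e \<Longrightarrow> \<exists>z. P z \<and> f z \<le> a + e"
  shows "Inf {ereal (f z) | z. P z} = ereal a"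
proof (rule antisym)
  show "Inf {ereal (f z) | z. P z} \<le> ereal a"
  proof (rule ereal_le_epsilon2)
    fix e :: real
    assume "0 < e"
    then obtain z where "P z" and "f z \<le> a + e"
      using assms(2) by blast
    then have "Inf {ereal (f z) | z. P z} \<le> ereal (f z)"
      by (intro Inf_lower) blast
    also have "\<dots> \<le> ereal a + ereal e"
      using \<open>f z \<le> a + e\<close> by simp
    finally show "Inf {ereal (f z) | z. P z} \<le> ereal a + ereal e" .
  qed
  show "ereal a \<le> Inf {ereal (f z) | z. P z}"
    using assms(1) by (auto intro: Inf_greatest)
qed

section \<open>Discretising a tensor\<close>

locale lattice_representation =
  fixes \<alpha> :: "(linf \<times> 'x::real_normed_vector) list \<Rightarrow> real"
    and J :: "'x \<Rightarrow> 'l::{banach, ordered_real_vector, lattice}"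
  assumes left_tensorial: "left_tensorial \<alpha>"
    and banach_lattice: "banach_lattice TYPE('l)"
    and linear_J: "linear J"
    and norm_J: "\<And>x. norm (J x) = norm x"
    and norm_lsup_labs_J: "\<And>ys. ys \<noteq> [] \<Longrightarrow>
      norm (lsup (map (\<lambda>y. labs (J y)) ys)) = \<alpha> (zip (map unitvec [0..<length ys]) ys)"

lemma (in lattice_representation) tensor_norm: "tensor_norm \<alpha>"
  using left_tensorial unfolding left_tensorial_def by blast

locale sampled_representation = lattice_representation \<alpha> J
  for \<alpha> :: "(linf \<times> 'x::real_normed_vector) list \<Rightarrow> real"
    and J :: "'x \<Rightarrow> 'l::{banach, ordered_real_vector, lattice}" +
  fixes u :: "(linf \<times> 'x) list" and \<epsilon> :: real and K :: nat and \<sigma> p :: "nat \<Rightarrow> nat"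
  assumes eps_nonneg: "0 \<le> \<epsilon>"
    and sigma_less: "\<And>i. \<sigma> i < K"
    and sample_close: "\<And>h x i. (h, x) \<in> set u \<Longrightarrow>
      \<bar>apply_bcontfun h i - apply_bcontfun h (p (\<sigma> i))\<bar> \<le> \<epsilon>"
begin

definition sample :: "nat \<Rightarrow> 'x" where
  "sample k = (\<Sum>(h, x)\<leftarrow>u. apply_bcontfun h (p k) *\<^sub>R x)"

definition sampled_tensor :: "(linf \<times> 'x) list" where
  "sampled_tensor = map (\<lambda>k. (unitvec k, sample k)) [0..<K]"

definition sample_sup :: 'l where
  "sample_sup = lsup (map (\<lambda>k. labs (J (sample k))) [0..<K])"

lemma alpha_sampled_tensor: "\<alpha> sampled_tensor = norm sample_sup"
proof -
  have "map sample [0..<K] \<noteq> []"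
    using sigma_less[of 0] by simp
  moreover have "zip (map unitvec [0..<K]) (map sample [0..<K]) = sampled_tensor"
    unfolding sampled_tensor_def by (simp add: list_eq_iff_nth_eq)
  ultimately show ?thesis
    using norm_lsup_labs_J[of "map sample [0..<K]"] by (simp add: sample_sup_def o_def)
qed

lemma sample_sup_nonneg: "0 \<le> sample_sup"
  unfolding sample_sup_def by (rule lsup_nonneg) (auto simp: labs_nonneg)

lemma labs_J_sample_le: "k < K \<Longrightarrow> labs (J (sample k)) \<le> sample_sup"
  unfolding sample_sup_def by (rule lsup_upper) simp

lemma J_sample: "J (sample k) = (\<Sum>(h, x)\<leftarrow>u. apply_bcontfun h (p k) *\<^sub>R J x)"
  unfolding sample_def by (simp add: linear_sum_list[OF linear_J] case_prod_unfold linear_scale[OF linear_J])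

lemma alpha_sampled_tensor_le: "\<alpha> sampled_tensor \<le> \<alpha> u"
proof -
  have "\<alpha> sampled_tensor = \<alpha> (map (\<lambda>(h, x). (linf_sample p K h, x)) u)"
    unfolding sampled_tensor_def sample_def
    by (rule tensor_norm_cong[OF tensor_norm tensor_eq_linf_sample, symmetric])
  also have "\<dots> \<le> \<alpha> u"
    by (rule left_tensorial_map_le[OF left_tensorial bounded_linear_linf_sample onorm_linf_sample_le])
  finally show ?thesis .
qed

lemma alpha_le_sampled_tensor: "\<alpha> u \<le> \<alpha> sampled_tensor + \<epsilon> * (\<Sum>(h, x)\<leftarrow>u. norm x)"
proof -
  let ?R = "\<lambda>h. linf_reindex \<sigma> (linf_sample p K h)"
  have "\<alpha> (map (\<lambda>(h, x). (?R h, x)) u)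
      = \<alpha> (map (\<lambda>(h, x). (linf_reindex \<sigma> h, x)) (map (\<lambda>(h, x). (linf_sample p K h, x)) u))"
    by (simp add: o_def case_prod_unfold)
  also have "\<dots> = \<alpha> (map (\<lambda>(h, x). (linf_reindex \<sigma> h, x)) sampled_tensor)"
    unfolding sampled_tensor_def sample_def
    by (intro tensor_norm_cong[OF tensor_norm] tensor_eq_map_left tensor_eq_linf_sample
        bounded_linear.linear[OF bounded_linear_linf_reindex])
  also have "\<dots> \<le> \<alpha> sampled_tensor"
    by (rule left_tensorial_map_le[OF left_tensorial bounded_linear_linf_reindex onorm_linf_reindex_le])
  finally have sampled_part: "\<alpha> (map (\<lambda>(h, x). (?R h, x)) u) \<le> \<alpha> sampled_tensor" .
  have "\<alpha> (map (\<lambda>(h, x). (h - ?R h, x)) u) \<le> (\<Sum>(h, x)\<leftarrow>u. norm (h - ?R h) * norm x)"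
    using left_tensorial_le_projective[OF left_tensorial, of "map (\<lambda>(h, x). (h - ?R h, x)) u"]
    by (simp add: o_def case_prod_unfold)
  also have "\<dots> \<le> (\<Sum>(h, x)\<leftarrow>u. \<epsilon> * norm x)"
    using sample_close sigma_less
    by (intro sum_list_mono) (auto intro!: mult_right_mono norm_diff_linf_reindex_sample_le)
  also have "\<dots> = \<epsilon> * (\<Sum>(h, x)\<leftarrow>u. norm x)"
    using scaleR_sum_list[of \<epsilon> "\<lambda>(h, x). norm x" u] by (simp add: case_prod_unfold)
  finally have remainder: "\<alpha> (map (\<lambda>(h, x). (h - ?R h, x)) u) \<le> \<epsilon> * (\<Sum>(h, x)\<leftarrow>u. norm x)" .
  have "\<alpha> u = \<alpha> (map (\<lambda>(h, x). (?R h, x)) u @ map (\<lambda>(h, x). (h - ?R h, x)) u)"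
    by (rule tensor_norm_cong[OF tensor_norm tensor_eq_split_left])
  also have "\<dots> \<le> \<alpha> (map (\<lambda>(h, x). (?R h, x)) u) + \<alpha> (map (\<lambda>(h, x). (h - ?R h, x)) u)"
    by (rule tensor_norm_append_le[OF tensor_norm])
  finally show ?thesis
    using sampled_part remainder by linarith
qed

lemma sample_sup_le_order_bound:
  assumes "order_bound (map (\<lambda>(h, x). (h, J x)) u) z"
  shows "sample_sup \<le> z"
  unfolding sample_sup_def
proof (rule lsup_least)
  show "0 \<le> z"
    using assms unfolding order_bound_def by blast
  fix y
  assume "y \<in> set (map (\<lambda>k. labs (J (sample k))) [0..<K])"
  then obtain k where "y = labs (J (sample k))"
    by auto
  also have "\<dots> \<le> onorm (\<lambda>g :: linf. apply_bcontfun g (p k)) *\<^sub>R z"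
    using assms bounded_linear_linf_eval[of "p k"] unfolding order_bound_map_iff J_sample by blast
  also have "\<dots> \<le> z"
    using scaleR_right_mono[OF onorm_linf_eval_le \<open>0 \<le> z\<close>] by simp
  finally show "y \<le> z" .
qed

lemma sum_scaleR_J_split:
  assumes "linear \<phi>"
  shows "(\<Sum>(h, x)\<leftarrow>u. \<phi> h *\<^sub>R J x)
    = (\<Sum>k<K. \<phi> (linf_reindex \<sigma> (unitvec k)) *\<^sub>R J (sample k))
      + (\<Sum>(h, x)\<leftarrow>u. \<phi> (h - linf_reindex \<sigma> (linf_sample p K h)) *\<^sub>R J x)"
proof -
  define c where "c k = \<phi> (linf_reindex \<sigma> (unitvec k))" for k
  \<comment> \<open>\<open>\<psi>\<close> stays folded: unfolded, the termwise identity below would be a looping simp rule.\<close>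
  define \<psi> where "\<psi> h = \<phi> (h - linf_reindex \<sigma> (linf_sample p K h))" for h
  have lin: "linear (\<lambda>g. \<phi> (linf_reindex \<sigma> g))"
    using linear_compose[OF bounded_linear.linear[OF bounded_linear_linf_reindex] assms]
    by (simp add: o_def)
  have "\<phi> (linf_reindex \<sigma> (linf_sample p K h)) = (\<Sum>k<K. apply_bcontfun h (p k) * c k)" for h
    using linear_sum[OF lin, of "\<lambda>k. apply_bcontfun h (p k) *\<^sub>R unitvec k" "{..<K}"]
    unfolding linf_sample_def c_def by (simp add: linear_scale[OF lin])
  then have "\<phi> h = (\<Sum>k<K. apply_bcontfun h (p k) * c k) + \<psi> h" for h
    using linear_diff[OF assms, of h "linf_reindex \<sigma> (linf_sample p K h)"] by (simp add: \<psi>_def)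
  then have "\<phi> h *\<^sub>R J x = (\<Sum>k<K. c k *\<^sub>R (apply_bcontfun h (p k) *\<^sub>R J x)) + \<psi> h *\<^sub>R J x" for h x
    by (simp add: scaleR_left_distrib scaleR_sum_left mult.commute)
  then have "(\<Sum>(h, x)\<leftarrow>u. \<phi> h *\<^sub>R J x)
      = (\<Sum>k<K. c k *\<^sub>R (\<Sum>(h, x)\<leftarrow>u. apply_bcontfun h (p k) *\<^sub>R J x)) + (\<Sum>(h, x)\<leftarrow>u. \<psi> h *\<^sub>R J x)"
    by (simp add: case_prod_unfold sum_list_addf sum_list_sum_swap scaleR_sum_list)
  then show ?thesis
    by (simp add: c_def \<psi>_def J_sample)
qed

lemma labs_sampled_part_le:
  assumes "bounded_linear \<phi>"
  shows "labs (\<Sum>k<K. \<phi> (linf_reindex \<sigma> (unitvec k)) *\<^sub>R J (sample k)) \<le> onorm \<phi> *\<^sub>R sample_sup"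
proof -
  have "labs (\<Sum>k<K. \<phi> (linf_reindex \<sigma> (unitvec k)) *\<^sub>R J (sample k))
      \<le> (\<Sum>k<K. \<bar>\<phi> (linf_reindex \<sigma> (unitvec k))\<bar> *\<^sub>R sample_sup)"
    by (intro order_trans[OF labs_sum_le] sum_mono order_trans[OF labs_scaleR_le]
        scaleR_left_mono labs_J_sample_le) simp_all
  also have "\<dots> = (\<Sum>k<K. \<bar>(\<phi> \<circ> linf_reindex \<sigma>) (unitvec k)\<bar>) *\<^sub>R sample_sup"
    by (simp add: scaleR_sum_left)
  also have "\<dots> \<le> onorm \<phi> *\<^sub>R sample_sup"
  proof (intro scaleR_right_mono sample_sup_nonneg)
    have "bounded_linear (\<phi> \<circ> linf_reindex \<sigma>)"
      by (rule bounded_linear_compose[OF assms bounded_linear_linf_reindex, unfolded o_def[symmetric]])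
    then have "(\<Sum>k<K. \<bar>(\<phi> \<circ> linf_reindex \<sigma>) (unitvec k)\<bar>) \<le> onorm (\<phi> \<circ> linf_reindex \<sigma>)"
      by (rule sum_abs_unitvec_le_onorm)
    also have "\<dots> \<le> onorm \<phi> * onorm (linf_reindex \<sigma>)"
      by (rule onorm_compose[OF assms bounded_linear_linf_reindex])
    also have "\<dots> \<le> onorm \<phi>"
      using onorm_linf_reindex_le onorm_pos_le[OF assms] by (simp add: mult_left_le)
    finally show "(\<Sum>k<K. \<bar>(\<phi> \<circ> linf_reindex \<sigma>) (unitvec k)\<bar>) \<le> onorm \<phi>" .
  qed
  finally show ?thesis .
qed

lemma labs_remainder_le:
  assumes "bounded_linear \<phi>"
  shows "labs (\<Sum>(h, x)\<leftarrow>u. \<phi> (h - linf_reindex \<sigma> (linf_sample p K h)) *\<^sub>R J x)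
    \<le> (onorm \<phi> * \<epsilon>) *\<^sub>R (\<Sum>(h, x)\<leftarrow>u. labs (J x))"
proof -
  have "\<bar>\<phi> (h - linf_reindex \<sigma> (linf_sample p K h))\<bar> \<le> onorm \<phi> * \<epsilon>" if "(h, x) \<in> set u" for h x
  proof -
    have "\<bar>\<phi> (h - linf_reindex \<sigma> (linf_sample p K h))\<bar>
        \<le> onorm \<phi> * norm (h - linf_reindex \<sigma> (linf_sample p K h))"
      using onorm[OF assms] by simp
    also have "\<dots> \<le> onorm \<phi> * \<epsilon>"
      using that sigma_less sample_close
      by (intro mult_left_mono onorm_pos_le[OF assms] norm_diff_linf_reindex_sample_le) auto
    finally show ?thesis .
  qed
  then have "labs (\<phi> (h - linf_reindex \<sigma> (linf_sample p K h)) *\<^sub>R J x) \<le> (onorm \<phi> * \<epsilon>) *\<^sub>R labs (J x)"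
    if "(h, x) \<in> set u" for h x
    using that by (intro order_trans[OF labs_scaleR_le] scaleR_right_mono labs_nonneg) auto
  then have "labs (\<Sum>(h, x)\<leftarrow>u. \<phi> (h - linf_reindex \<sigma> (linf_sample p K h)) *\<^sub>R J x)
      \<le> (\<Sum>(h, x)\<leftarrow>u. (onorm \<phi> * \<epsilon>) *\<^sub>R labs (J x))"
    by (intro order_trans[OF labs_sum_list_le] sum_list_mono) auto
  then show ?thesis
    by (simp add: scaleR_sum_list case_prod_unfold)
qed

lemma order_bound_sample_sup:
  "order_bound (map (\<lambda>(h, x). (h, J x)) u) (sample_sup + \<epsilon> *\<^sub>R (\<Sum>(h, x)\<leftarrow>u. labs (J x)))"
  unfolding order_bound_map_iff
proof (intro conjI allI impI)
  show "0 \<le> sample_sup + \<epsilon> *\<^sub>R (\<Sum>(h, x)\<leftarrow>u. labs (J x))"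
    using sample_sup_nonneg eps_nonneg
    by (intro add_nonneg_nonneg scaleR_nonneg_nonneg sum_list_nonneg) (auto simp: labs_nonneg)
  fix \<phi> :: "linf \<Rightarrow> real"
  assume "bounded_linear \<phi>"
  then show "labs (\<Sum>(h, x)\<leftarrow>u. \<phi> h *\<^sub>R J x)
      \<le> onorm \<phi> *\<^sub>R (sample_sup + \<epsilon> *\<^sub>R (\<Sum>(h, x)\<leftarrow>u. labs (J x)))"
    unfolding sum_scaleR_J_split[OF bounded_linear.linear[OF \<open>bounded_linear \<phi>\<close>]]
    using order_trans[OF labs_add_le add_mono[OF labs_sampled_part_le[OF \<open>bounded_linear \<phi>\<close>]
          labs_remainder_le[OF \<open>bounded_linear \<phi>\<close>]]]
    by (simp add: scaleR_right_distrib)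
qed

lemma norm_sample_sup_plus_le:
  "norm (sample_sup + \<epsilon> *\<^sub>R (\<Sum>(h, x)\<leftarrow>u. labs (J x)))
    \<le> \<alpha> sampled_tensor + \<epsilon> * (\<Sum>(h, x)\<leftarrow>u. norm x)"
proof -
  have "norm (\<Sum>(h, x)\<leftarrow>u. labs (J x)) \<le> (\<Sum>(h, x)\<leftarrow>u. norm x)"
    using norm_sum_list_le[of "\<lambda>(h, x). labs (J x)" u]
    by (simp add: case_prod_unfold banach_lattice_norm_labs[OF banach_lattice] norm_J)
  then have "norm (\<epsilon> *\<^sub>R (\<Sum>(h, x)\<leftarrow>u. labs (J x))) \<le> \<epsilon> * (\<Sum>(h, x)\<leftarrow>u. norm x)"
    using eps_nonneg by (simp add: mult_left_mono)
  then show ?thesis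
    using norm_triangle_ineq[of sample_sup "\<epsilon> *\<^sub>R (\<Sum>(h, x)\<leftarrow>u. labs (J x))"]
    unfolding alpha_sampled_tensor by linarith
qed

end

context lattice_representation
begin

lemma obtain_sampled_representation:
  assumes "0 < e"
  obtains \<epsilon> K \<sigma> p where "sampled_representation \<alpha> J u \<epsilon> K \<sigma> p"
    and "\<epsilon> * (\<Sum>(h, x)\<leftarrow>u. norm x) \<le> e"
proof -
  obtain \<epsilon> :: real and \<sigma> :: "nat \<Rightarrow> nat" and K :: nat and p :: "nat \<Rightarrow> nat"
    where "0 \<le> \<epsilon>" and "\<epsilon> * (\<Sum>(h, x)\<leftarrow>u. norm x) \<le> e" and "\<And>i. \<sigma> i < K"
      and "\<And>h x i. (h, x) \<in> set u \<Longrightarrow> \<bar>apply_bcontfun h i - apply_bcontfun h (p (\<sigma> i))\<bar> \<le> \<epsilon>"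
    using assms by (rule linf_list_sampling[where u = u]) iprover
  then show thesis
    by (intro that sampled_representation.intro sampled_representation_axioms.intro
        lattice_representation_axioms)
qed

lemma order_bound_norm_ge:
  assumes "order_bound (map (\<lambda>(h, x). (h, J x)) u) z"
  shows "\<alpha> u \<le> norm z"
proof (rule field_le_epsilon)
  fix e :: real
  assume "0 < e"
  then obtain \<epsilon> K \<sigma> p where sampled: "sampled_representation \<alpha> J u \<epsilon> K \<sigma> p"
    and small: "\<epsilon> * (\<Sum>(h, x)\<leftarrow>u. norm x) \<le> e"
    by (rule obtain_sampled_representation)
  interpret sampled_representation \<alpha> J u \<epsilon> K \<sigma> p
    by (fact sampled)
  have "norm sample_sup \<le> norm z"
    by (rule banach_lattice_norm_mono[OF banach_lattice sample_sup_nonneg sample_sup_le_order_bound[OF assms]])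
  then show "\<alpha> u \<le> norm z + e"
    using alpha_le_sampled_tensor small by (simp add: alpha_sampled_tensor)
qed

lemma exists_order_bound_norm_le:
  assumes "0 < e"
  shows "\<exists>z. order_bound (map (\<lambda>(h, x). (h, J x)) u) z \<and> norm z \<le> \<alpha> u + e"
proof -
  obtain \<epsilon> K \<sigma> p where sampled: "sampled_representation \<alpha> J u \<epsilon> K \<sigma> p"
    and small: "\<epsilon> * (\<Sum>(h, x)\<leftarrow>u. norm x) \<le> e"
    using assms by (rule obtain_sampled_representation)
  interpret sampled_representation \<alpha> J u \<epsilon> K \<sigma> p
    by (fact sampled)
  show ?thesis
    using order_bound_sample_sup norm_sample_sup_plus_le alpha_sampled_tensor_le small
    by (intro exI[of _ "sample_sup + \<epsilon> *\<^sub>R (\<Sum>(h, x)\<leftarrow>u. labs (J x))"]) auto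
qed

lemma m_norm_map_J: "m_norm (map (\<lambda>(h, x). (h, J x)) u) = ereal (\<alpha> u)"
  unfolding m_norm_eq_Inf_order_bound
  by (rule Inf_ereal_eqI) (auto intro: order_bound_norm_ge exists_order_bound_norm_le)

end

theorem corollary1p8:
  fixes \<alpha> :: "(linf \<times> 'x::banach) list \<Rightarrow> real"
    and J :: "'x \<Rightarrow> 'l::{banach, ordered_real_vector, lattice}"
  assumes "left_tensorial \<alpha>"
    and "banach_lattice TYPE('l)"
    and "linear J" and "\<forall>x. norm (J x) = norm x"
    and "\<forall>ys :: 'x list. ys \<noteq> [] \<longrightarrow>
           norm (lsup (map (\<lambda>y. labs (J y)) ys)) = \<alpha> (zip (map unitvec [0..<length ys]) ys)"
  shows "\<forall>u :: (linf \<times> 'x) list.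
           m_norm (map (\<lambda>(h,x). (h, J x)) u) = ereal (\<alpha> u)"
proof -
  interpret lattice_representation \<alpha> J
    using assms by (intro lattice_representation.intro) auto
  show ?thesis
    using m_norm_map_J by blast
qed

end
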